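(* Let $\varepsilon>0$, let $T\in\mathbb{R}$, and let $\{f_i\}_{i\in\mathbb{N}}$ be real-valued queries on datasets such that each $f_i$ is 1-sensitive (i.e. $|f_i(D)-f_i(D')|\le 1$ for all neighboring $D,D'$) and the family has unidirectional sensitivity: for all neighboring datasets $D,D'$, if $f_i(D)>f_i(D')$ for some $i$, then there is no $j$ with $f_j(D)<f_j(D')$. Consider UDSAboveThreshold: on input $D$, sample $\hat T\gets T+\mathrm{Lap}(2/\varepsilon)$; then for $i=1,2,\dots$, sample a fresh $\nu_i\sim\mathrm{Lap}(2/\varepsilon)$; if $f_i(D)+\nu_i\ge\hat T$, output $a_i=\top$ and halt; otherwise output $a_i=\bot$ and continue. Then UDSAboveThreshold (whose output is the stream $a_1,a_2,\dots$) is $\varepsilon$-differentially private.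
   Context: $\mathrm{Lap}(b)$ is the Laplace distribution with mean $0$ and scale $b$, density $\frac{1}{2b}e^{-|x|/b}$; all Laplace samples are independent. Two datasets are neighboring if they differ by replacing the contribution of one individual. A randomized algorithm $M$ is $\varepsilon$-differentially private if for every pair of neighboring datasets $D,D'$ and every set of outcomes $S$, $\Pr[M(D)\in S]\le e^{\varepsilon}\Pr[M(D')\in S]$. *)

theory Defs
  imports "HOL-Probability.Probability"
begin

definition lap :: "real \<Rightarrow> real measure" where
  "lap b = density lborel (\<lambda>x. ennreal (exp (- \<bar>x\<bar> / b) / (2 * b)))"

definition neighboring :: "'a list \<Rightarrow> 'a list \<Rightarrow> bool" where
  "neighboring D D' \<longleftrightarrow> length D = length D' \<and>
     card {i. i < length D \<and> D ! i \<noteq> D' ! i} \<le> 1"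

definition sensitivity_one :: "('d \<Rightarrow> real) \<Rightarrow> ('d \<Rightarrow> 'd \<Rightarrow> bool) \<Rightarrow> bool" where
  "sensitivity_one g nb \<longleftrightarrow> (\<forall>D D'. nb D D' \<longrightarrow> \<bar>g D - g D'\<bar> \<le> 1)"

definition unidirectional :: "(nat \<Rightarrow> 'd \<Rightarrow> real) \<Rightarrow> ('d \<Rightarrow> 'd \<Rightarrow> bool) \<Rightarrow> bool" where
  "unidirectional f nb \<longleftrightarrow>
     (\<forall>D D'. nb D D' \<longrightarrow> (\<exists>i. f i D > f i D') \<longrightarrow> \<not> (\<exists>j. f j D < f j D'))"

text \<open>Transcript of UDSAboveThreshold for threshold noise \<tau> (so \<hat>T = T + \<tau>) and query
  noises \<nu>: entry i is None if the algorithm halted before round i (no output),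
  Some True for \<top>, Some False for \<bottom>.\<close>
definition uds_transcript ::
  "(nat \<Rightarrow> 'd \<Rightarrow> real) \<Rightarrow> real \<Rightarrow> 'd \<Rightarrow> real \<times> (nat \<Rightarrow> real) \<Rightarrow> nat \<Rightarrow> bool option" where
  "uds_transcript f T D = (\<lambda>(\<tau>, \<nu>) i.
     if \<exists>j<i. f j D + \<nu> j \<ge> T + \<tau> then None
     else Some (f i D + \<nu> i \<ge> T + \<tau>))"

definition UDSAboveThreshold ::
  "real \<Rightarrow> (nat \<Rightarrow> 'd \<Rightarrow> real) \<Rightarrow> real \<Rightarrow> 'd \<Rightarrow> (nat \<Rightarrow> bool option) measure" where
  "UDSAboveThreshold \<epsilon> f T D =
     distr (lap (2 / \<epsilon>) \<Otimes>\<^sub>M (\<Pi>\<^sub>M i\<in>(UNIV::nat set). lap (2 / \<epsilon>)))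
           (count_space UNIV) (uds_transcript f T D)"

definition differentially_private ::
  "('d \<Rightarrow> 'o measure) \<Rightarrow> ('d \<Rightarrow> 'd \<Rightarrow> bool) \<Rightarrow> real \<Rightarrow> bool" where
  "differentially_private M nb \<epsilon> \<longleftrightarrow>
     (\<forall>D D'. nb D D' \<longrightarrow>
        (\<forall>S \<in> sets (M D). emeasure (M D) S \<le> ennreal (exp \<epsilon>) * emeasure (M D') S))"

end

theory Submission
  imports Defs
begin

text \<open>Both runs are driven by the same noise (\<tau>, \<nu>) \<in> \<real> \<times> (\<nat> \<Rightarrow> \<real>), and the transcript is determined
  by the round at which the run halts, if it halts at all. Because all sensitivities point the same
  way, a single a \<in> [0, 1] satisfies f i D' \<le> f i D + a \<le> f i D' + 1 for every i. Shifting the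
  threshold noise by a and the noise of query k by 1 maps every noise vector on which D halts in
  round k to one on which D' halts in round k, and the threshold shift alone preserves never
  halting. Shifting one Laplace(b) coordinate by at most 1 inflates probabilities by at most
  exp(1/b) = exp(\<epsilon>/2), so every halting round has probability at most exp \<epsilon> times its probability
  under D'; summing over the countably many halting rounds gives \<epsilon>-differential privacy.\<close>

definition laplace_density :: "real \<Rightarrow> real \<Rightarrow> real" where
  "laplace_density b x = exp (- \<bar>x\<bar> / b) / (2 * b)"

lemma lap_eq_density: "lap b = density lborel (\<lambda>x. ennreal (laplace_density b x))"
  by (simp add: lap_def laplace_density_def)

lemma sets_lap [measurable_cong]: "sets (lap b) = sets borel"
  by (simp add: lap_def)

lemma space_lap [simp]: "space (lap b) = UNIV"
  by (simp add: lap_def)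

lemma borel_measurable_laplace_density [measurable]: "laplace_density b \<in> borel_measurable borel"
  unfolding laplace_density_def by measurable

lemma laplace_density_nonneg: "b > 0 \<Longrightarrow> 0 \<le> laplace_density b x"
  by (simp add: laplace_density_def)

text \<open>Away from 0 the Laplace density is the average of an exponential density and its mirror image.\<close>
lemma prob_space_lap:
  assumes b: "b > 0"
  shows "prob_space (lap b)"
proof -
  let ?e = "\<lambda>x. ennreal (exponential_density (1 / b) x)"
  have e: "(\<integral>\<^sup>+ x. ?e x \<partial>lborel) = 1"
  proof -
    interpret prob_space "density lborel ?e"
      using b by (intro prob_space_exponential_density) simp
    show ?thesis
      using emeasure_space_1 by (simp add: emeasure_density)
  qed
  have e_mirror: "(\<integral>\<^sup>+ x. ?e (- x) \<partial>lborel) = 1"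
    using nn_integral_real_affine[of ?e "-1" 0] e by simp
  have "AE x in lborel. ennreal (laplace_density b x) = (?e x + ?e (- x)) / 2"
    using AE_lborel_singleton[of 0]
  proof eventually_elim
    case (elim x)
    have mirror: "laplace_density b x = (exponential_density (1 / b) x + exponential_density (1 / b) (- x)) / 2"
      using elim b by (auto simp: laplace_density_def exponential_density_def abs_if)
    show ?case
      unfolding mirror using b
      by (simp add: ennreal_plus[symmetric] ennreal_divide_numeral exponential_density_nonneg del: ennreal_plus)
  qed
  then have "(\<integral>\<^sup>+ x. ennreal (laplace_density b x) \<partial>lborel) = (\<integral>\<^sup>+ x. (?e x + ?e (- x)) / 2 \<partial>lborel)"
    by (rule nn_integral_cong_AE)
  also have "\<dots> = 1"
    using e e_mirror by (simp add: nn_integral_divide nn_integral_add)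
  finally show ?thesis
    unfolding lap_eq_density by (intro prob_spaceI) (simp add: emeasure_density)
qed

lemma laplace_density_shift_le:
  assumes "b > 0"
  shows "laplace_density b (y - a) \<le> exp (\<bar>a\<bar> / b) * laplace_density b y"
proof -
  have "(- \<bar>y - a\<bar>) / b \<le> (\<bar>a\<bar> - \<bar>y\<bar>) / b"
    using assms by (intro divide_right_mono) auto
  then show ?thesis
    using assms by (simp add: laplace_density_def divide_right_mono diff_divide_distrib flip: exp_add)
qed

definition pushforward_bounded :: "'a measure \<Rightarrow> ('a \<Rightarrow> 'a) \<Rightarrow> ennreal \<Rightarrow> bool" where
  "pushforward_bounded M t c \<longleftrightarrow> t \<in> measurable M M \<and>
     (\<forall>A \<in> sets M. emeasure M (t -` A \<inter> space M) \<le> c * emeasure M A)"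

lemma emeasure_le_pushforward_bounded:
  assumes "pushforward_bounded M t c" and "B \<in> sets M" and "A \<subseteq> t -` B \<inter> space M"
  shows "emeasure M A \<le> c * emeasure M B"
proof -
  have "t -` B \<inter> space M \<in> sets M"
    using assms(1,2) by (auto simp: pushforward_bounded_def intro: measurable_sets)
  then have "emeasure M A \<le> emeasure M (t -` B \<inter> space M)"
    using assms(3) by (intro emeasure_mono)
  also have "\<dots> \<le> c * emeasure M B"
    using assms(1,2) by (simp add: pushforward_bounded_def)
  finally show ?thesis .
qed

lemma pushforward_bounded_mono:
  "pushforward_bounded M t c \<Longrightarrow> c \<le> d \<Longrightarrow> pushforward_bounded M t d"
  unfolding pushforward_bounded_def by (meson mult_right_mono order_trans zero_le)

lemma pushforward_bounded_comp:
  assumes s: "pushforward_bounded M s c" and t: "pushforward_bounded M t d"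
  shows "pushforward_bounded M (s \<circ> t) (c * d)"
  unfolding pushforward_bounded_def
proof (intro conjI ballI)
  show "s \<circ> t \<in> measurable M M"
    using s t by (auto simp: pushforward_bounded_def intro: measurable_comp)
  fix A assume A: "A \<in> sets M"
  have sA: "s -` A \<inter> space M \<in> sets M"
    using s A by (auto simp: pushforward_bounded_def intro: measurable_sets)
  have "(s \<circ> t) -` A \<inter> space M = t -` (s -` A \<inter> space M) \<inter> space M"
    using t by (auto simp: pushforward_bounded_def dest: measurable_space)
  also have "emeasure M \<dots> \<le> d * emeasure M (s -` A \<inter> space M)"
    using t sA unfolding pushforward_bounded_def by blast
  also have "\<dots> \<le> d * (c * emeasure M A)"
    using s A by (intro mult_left_mono) (simp_all add: pushforward_bounded_def)
  finally show "emeasure M ((s \<circ> t) -` A \<inter> space M) \<le> c * d * emeasure M A"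
    by (simp add: ac_simps)
qed

lemma pushforward_bounded_lap_shift:
  assumes b: "b > 0"
  shows "pushforward_bounded (lap b) (\<lambda>x. x + a) (exp (\<bar>a\<bar> / b))"
  unfolding pushforward_bounded_def
proof (intro conjI ballI)
  show "(\<lambda>x. x + a) \<in> measurable (lap b) (lap b)"
    by measurable
  fix A assume "A \<in> sets (lap b)"
  then have [measurable]: "A \<in> sets borel"
    by (simp add: sets_lap)
  have "(\<lambda>x. x + a) -` A \<in> sets borel"
    using measurable_sets[of "\<lambda>x. x + a" borel borel A] by simp
  then have "emeasure (lap b) ((\<lambda>x. x + a) -` A \<inter> space (lap b))
      = (\<integral>\<^sup>+ x. ennreal (laplace_density b x) * indicator A (a + x) \<partial>lborel)"
    unfolding lap_eq_density
    by (subst emeasure_density) (auto intro!: nn_integral_cong simp: add.commute split: split_indicator)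
  also have "\<dots> = (\<integral>\<^sup>+ y. ennreal (laplace_density b (y - a)) * indicator A y \<partial>lborel)"
    using nn_integral_real_affine[of "\<lambda>y. ennreal (laplace_density b (y - a)) * indicator A y" 1 a]
    by simp
  also have "\<dots> \<le> (\<integral>\<^sup>+ y. exp (\<bar>a\<bar> / b) * (ennreal (laplace_density b y) * indicator A y) \<partial>lborel)"
    using b by (intro nn_integral_mono)
      (auto simp: mult.assoc[symmetric] laplace_density_shift_le laplace_density_nonneg
        simp flip: ennreal_mult intro!: mult_right_mono ennreal_leI split: split_indicator)
  also have "\<dots> = exp (\<bar>a\<bar> / b) * emeasure (lap b) A"
    unfolding lap_eq_density by (simp add: emeasure_density nn_integral_cmult)
  finally show "emeasure (lap b) ((\<lambda>x. x + a) -` A \<inter> space (lap b)) \<le> exp (\<bar>a\<bar> / b) * emeasure (lap b) A" .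
qed

lemma measurable_map_prod_pair [measurable]:
  assumes [measurable]: "s \<in> measurable M M'" "t \<in> measurable Q Q'"
  shows "map_prod s t \<in> measurable (M \<Otimes>\<^sub>M Q) (M' \<Otimes>\<^sub>M Q')"
  unfolding map_prod_def by measurable

lemma pushforward_bounded_pair_snd:
  assumes Q: "sigma_finite_measure Q" and t: "pushforward_bounded Q t c"
  shows "pushforward_bounded (M \<Otimes>\<^sub>M Q) (map_prod id t) c"
  unfolding pushforward_bounded_def
proof (intro conjI ballI)
  interpret Q: sigma_finite_measure Q by (rule Q)
  have [measurable]: "t \<in> measurable Q Q"
    using t by (simp add: pushforward_bounded_def)
  show "map_prod id t \<in> measurable (M \<Otimes>\<^sub>M Q) (M \<Otimes>\<^sub>M Q)"
    by measurable
  fix A assume A: "A \<in> sets (M \<Otimes>\<^sub>M Q)"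
  let ?A' = "map_prod id t -` A \<inter> space (M \<Otimes>\<^sub>M Q)"
  have A': "?A' \<in> sets (M \<Otimes>\<^sub>M Q)"
    using A by measurable
  have "emeasure Q (Pair x -` ?A') \<le> c * emeasure Q (Pair x -` A)" for x
  proof (cases "x \<in> space M")
    case True
    then have "Pair x -` ?A' = t -` (Pair x -` A) \<inter> space Q"
      by (auto simp: space_pair_measure)
    then show ?thesis
      using t sets_Pair1[OF A] by (simp add: pushforward_bounded_def)
  qed (auto simp: space_pair_measure)
  then have "emeasure (M \<Otimes>\<^sub>M Q) ?A' \<le> (\<integral>\<^sup>+ x. c * emeasure Q (Pair x -` A) \<partial>M)"
    by (simp add: Q.emeasure_pair_measure_alt[OF A'] nn_integral_mono)
  also have "\<dots> = c * emeasure (M \<Otimes>\<^sub>M Q) A"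
    using A by (simp add: Q.emeasure_pair_measure_alt nn_integral_cmult Q.measurable_emeasure_Pair)
  finally show "emeasure (M \<Otimes>\<^sub>M Q) ?A' \<le> c * emeasure (M \<Otimes>\<^sub>M Q) A" .
qed

lemma pushforward_bounded_pair_fst:
  assumes MQ: "pair_sigma_finite M Q" and s: "pushforward_bounded M s c"
  shows "pushforward_bounded (M \<Otimes>\<^sub>M Q) (map_prod s id) c"
  unfolding pushforward_bounded_def
proof (intro conjI ballI)
  interpret pair_sigma_finite M Q by (rule MQ)
  have [measurable]: "s \<in> measurable M M"
    using s by (simp add: pushforward_bounded_def)
  show "map_prod s id \<in> measurable (M \<Otimes>\<^sub>M Q) (M \<Otimes>\<^sub>M Q)"
    by measurable
  fix A assume A: "A \<in> sets (M \<Otimes>\<^sub>M Q)"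
  let ?A' = "map_prod s id -` A \<inter> space (M \<Otimes>\<^sub>M Q)"
  have A': "?A' \<in> sets (M \<Otimes>\<^sub>M Q)"
    using A by measurable
  have "emeasure M ((\<lambda>x. (x, y)) -` ?A') \<le> c * emeasure M ((\<lambda>x. (x, y)) -` A)" for y
  proof (cases "y \<in> space Q")
    case True
    then have "(\<lambda>x. (x, y)) -` ?A' = s -` ((\<lambda>x. (x, y)) -` A) \<inter> space M"
      by (auto simp: space_pair_measure)
    then show ?thesis
      using s sets_Pair2[OF A] by (simp add: pushforward_bounded_def)
  qed (auto simp: space_pair_measure)
  then have "emeasure (M \<Otimes>\<^sub>M Q) ?A' \<le> (\<integral>\<^sup>+ y. c * emeasure M ((\<lambda>x. (x, y)) -` A) \<partial>Q)"
    by (simp add: emeasure_pair_measure_alt2[OF A'] nn_integral_mono)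
  also have "\<dots> = c * emeasure (M \<Otimes>\<^sub>M Q) A"
    using A by (simp add: emeasure_pair_measure_alt2 nn_integral_cmult measurable_emeasure_Pair2)
  finally show "emeasure (M \<Otimes>\<^sub>M Q) ?A' \<le> c * emeasure (M \<Otimes>\<^sub>M Q) A" .
qed

lemma pushforward_bounded_PiM_component:
  assumes M: "\<And>i. i \<in> I \<Longrightarrow> prob_space (M i)" and k: "k \<in> I"
    and t: "pushforward_bounded (M k) t c"
  shows "pushforward_bounded (PiM I M) (\<lambda>w. w(k := t (w k))) c"
  unfolding pushforward_bounded_def
proof (intro conjI ballI)
  let ?P = "M k \<Otimes>\<^sub>M PiM I M"
  let ?ins = "\<lambda>(x, w). w(k := x)"
  let ?upd = "\<lambda>w. w(k := t (w k))"
  have t_meas [measurable]: "t \<in> measurable (M k) (M k)"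
    using t by (simp add: pushforward_bounded_def)
  have ins: "?ins \<in> measurable ?P (PiM I M)"
    unfolding case_prod_beta using k by (intro measurable_fun_upd[where J = I]) auto
  show upd: "?upd \<in> measurable (PiM I M) (PiM I M)"
    using k by (intro measurable_fun_upd[where J = I]) auto
  have P: "pair_sigma_finite (M k) (PiM I M)"
    using M k by (intro pair_sigma_finite.intro prob_space_imp_sigma_finite prob_space_PiM)
  have PiM_split: "distr ?P (PiM I M) ?ins = PiM I M"
    using distr_pair_PiM_eq_PiM[of I M k] M k by (simp add: insert_absorb)
  fix A assume A: "A \<in> sets (PiM I M)"
  have ins_A: "?ins -` A \<inter> space ?P \<in> sets ?P"
    using ins A by (rule measurable_sets)
  have "emeasure (PiM I M) (?upd -` A \<inter> space (PiM I M))
      = emeasure ?P (?ins -` (?upd -` A \<inter> space (PiM I M)) \<inter> space ?P)"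
    using measurable_sets[OF upd A] by (subst (1) PiM_split[symmetric]) (simp add: emeasure_distr[OF ins])
  also have "?ins -` (?upd -` A \<inter> space (PiM I M)) \<inter> space ?P
      = map_prod t id -` (?ins -` A \<inter> space ?P) \<inter> space ?P"
    using measurable_space[OF ins] measurable_space[OF t_meas]
    by (auto simp: space_pair_measure)
  also have "emeasure ?P \<dots> \<le> c * emeasure ?P (?ins -` A \<inter> space ?P)"
    using pushforward_bounded_pair_fst[OF P t] ins_A by (rule emeasure_le_pushforward_bounded) simp
  also have "emeasure ?P (?ins -` A \<inter> space ?P) = emeasure (PiM I M) A"
    using A by (subst (2) PiM_split[symmetric]) (simp add: emeasure_distr[OF ins])
  finally show "emeasure (PiM I M) (?upd -` A \<inter> space (PiM I M)) \<le> c * emeasure (PiM I M) A" .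
qed

abbreviation uds_noise :: "real \<Rightarrow> (real \<times> (nat \<Rightarrow> real)) measure" where
  "uds_noise b \<equiv> lap b \<Otimes>\<^sub>M (\<Pi>\<^sub>M i\<in>(UNIV::nat set). lap b)"

lemma space_uds_noise [simp]: "space (uds_noise b) = UNIV"
  by (simp add: space_pair_measure space_PiM)

lemma pushforward_bounded_noise_shift:
  assumes b: "b > 0"
  shows "pushforward_bounded (uds_noise b) (map_prod (\<lambda>x. x + a) (\<lambda>\<nu>. \<nu>(k := \<nu> k + a')))
           (exp ((\<bar>a\<bar> + \<bar>a'\<bar>) / b))"
proof -
  have lap: "prob_space (lap b)"
    using b by (rule prob_space_lap)
  have noise: "prob_space (\<Pi>\<^sub>M i\<in>(UNIV::nat set). lap b)"
    using lap by (rule prob_space_PiM)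
  have "pushforward_bounded (uds_noise b)
      (map_prod (\<lambda>x. x + a) id \<circ> map_prod id (\<lambda>\<nu>. \<nu>(k := \<nu> k + a')))
      (ennreal (exp (\<bar>a\<bar> / b)) * ennreal (exp (\<bar>a'\<bar> / b)))"
  proof (rule pushforward_bounded_comp)
    show "pushforward_bounded (uds_noise b) (map_prod (\<lambda>x. x + a) id) (exp (\<bar>a\<bar> / b))"
      using lap noise b
      by (intro pushforward_bounded_pair_fst pushforward_bounded_lap_shift pair_sigma_finite.intro
          prob_space_imp_sigma_finite)
    show "pushforward_bounded (uds_noise b) (map_prod id (\<lambda>\<nu>. \<nu>(k := \<nu> k + a'))) (exp (\<bar>a'\<bar> / b))"
      using lap noise b
      by (intro pushforward_bounded_pair_snd pushforward_bounded_PiM_component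
          pushforward_bounded_lap_shift prob_space_imp_sigma_finite) auto
  qed
  then show ?thesis
    by (simp add: map_prod.comp add_divide_distrib exp_add ennreal_mult)
qed

definition halting_round :: "(nat \<Rightarrow> 'd \<Rightarrow> real) \<Rightarrow> real \<Rightarrow> 'd \<Rightarrow> real \<times> (nat \<Rightarrow> real) \<Rightarrow> nat option" where
  "halting_round f T D = (\<lambda>(\<tau>, \<nu>).
     if \<exists>i. T + \<tau> \<le> f i D + \<nu> i then Some (LEAST i. T + \<tau> \<le> f i D + \<nu> i) else None)"

definition transcript_of_halt :: "nat option \<Rightarrow> nat \<Rightarrow> bool option" where
  "transcript_of_halt h i = (case h of
     None \<Rightarrow> Some False
   | Some k \<Rightarrow> if i < k then Some False else if i = k then Some True else None)"

lemma halting_round_eq_None_iff: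
  "halting_round f T D (\<tau>, \<nu>) = None \<longleftrightarrow> (\<forall>i. f i D + \<nu> i < T + \<tau>)"
  by (auto simp: halting_round_def not_le not_less)

lemma halting_round_eq_Some_iff:
  "halting_round f T D (\<tau>, \<nu>) = Some k \<longleftrightarrow> (\<forall>i<k. f i D + \<nu> i < T + \<tau>) \<and> T + \<tau> \<le> f k D + \<nu> k"
proof -
  let ?halts = "\<lambda>i. T + \<tau> \<le> f i D + \<nu> i"
  show ?thesis
  proof
    assume "halting_round f T D (\<tau>, \<nu>) = Some k"
    then have ex: "\<exists>i. ?halts i" and least: "(LEAST i. ?halts i) = k"
      by (auto simp: halting_round_def split: if_splits)
    show "(\<forall>i<k. f i D + \<nu> i < T + \<tau>) \<and> ?halts k"
      using LeastI_ex[OF ex] not_less_Least[of _ ?halts] least by (auto simp: not_le)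
  next
    assume halts: "(\<forall>i<k. f i D + \<nu> i < T + \<tau>) \<and> ?halts k"
    then have "(LEAST i. ?halts i) = k"
      by (intro Least_equality) (auto simp: not_le intro: leI)
    then show "halting_round f T D (\<tau>, \<nu>) = Some k"
      using halts by (auto simp: halting_round_def)
  qed
qed

lemma uds_transcript_eq_comp: "uds_transcript f T D = transcript_of_halt \<circ> halting_round f T D"
proof (intro ext)
  fix z :: "real \<times> (nat \<Rightarrow> real)" and i
  obtain \<tau> \<nu> where z: "z = (\<tau>, \<nu>)"
    by fastforce
  show "uds_transcript f T D z i = (transcript_of_halt \<circ> halting_round f T D) z i"
  proof (cases "halting_round f T D z")
    case None
    then have "\<forall>j. f j D + \<nu> j < T + \<tau>"
      by (simp add: z halting_round_eq_None_iff)
    then show ?thesis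
      using None by (auto simp: z uds_transcript_def transcript_of_halt_def not_le)
  next
    case (Some k)
    then have before: "\<forall>j<k. f j D + \<nu> j < T + \<tau>" and at: "T + \<tau> \<le> f k D + \<nu> k"
      by (simp_all add: z halting_round_eq_Some_iff)
    show ?thesis
    proof (cases i k rule: linorder_cases)
      case less
      then show ?thesis
        using Some before by (auto simp: z uds_transcript_def transcript_of_halt_def not_le)
    next
      case equal
      then show ?thesis
        using Some before at by (auto simp: z uds_transcript_def transcript_of_halt_def not_le)
    next
      case greater
      then show ?thesis
        using Some at by (auto simp: z uds_transcript_def transcript_of_halt_def)
    qed
  qed
qed

lemma measurable_halting_round [measurable]:
  "halting_round f T D \<in> measurable (uds_noise b) (count_space UNIV)"
proof -
  have [measurable]: "(\<lambda>z. snd z i) \<in> borel_measurable (uds_noise b)" for i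
    by measurable
  show ?thesis
    unfolding halting_round_def case_prod_beta by measurable
qed

lemma emeasure_UDSAboveThreshold:
  "emeasure (UDSAboveThreshold \<epsilon> f T D) S
     = emeasure (distr (uds_noise (2 / \<epsilon>)) (count_space UNIV) (halting_round f T D)) (transcript_of_halt -` S)"
proof -
  let ?halt = "distr (uds_noise (2 / \<epsilon>)) (count_space UNIV) (halting_round f T D)"
  have "UDSAboveThreshold \<epsilon> f T D = distr ?halt (count_space UNIV) transcript_of_halt"
    by (simp add: UDSAboveThreshold_def uds_transcript_eq_comp distr_distr)
  then show ?thesis
    using emeasure_distr[of transcript_of_halt ?halt "count_space UNIV" S] by simp
qed

lemma emeasure_countable_le_of_singletons:
  fixes N N' :: "'c::countable measure"
  assumes sets: "sets N = UNIV" "sets N' = UNIV"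
    and le: "\<And>y. emeasure N {y} \<le> c * emeasure N' {y}"
  shows "emeasure N B \<le> c * emeasure N' B"
proof -
  have singletons: "emeasure M B = (\<integral>\<^sup>+ y. emeasure M {y} \<partial>count_space B)"
    if "sets M = UNIV" for M :: "'c measure"
    using that by (intro emeasure_countable_singleton) auto
  have "emeasure N B = (\<integral>\<^sup>+ y. emeasure N {y} \<partial>count_space B)"
    using sets(1) by (rule singletons)
  also have "\<dots> \<le> (\<integral>\<^sup>+ y. c * emeasure N' {y} \<partial>count_space B)"
    using le by (intro nn_integral_mono)
  also have "\<dots> = c * (\<integral>\<^sup>+ y. emeasure N' {y} \<partial>count_space B)"
    by (simp add: nn_integral_cmult)
  also have "\<dots> = c * emeasure N' B"
    using sets(2) by (simp only: singletons)
  finally show ?thesis .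
qed

lemma halting_round_shift_None:
  assumes below: "\<And>i. f i D' \<le> f i D + a" and "halting_round f T D z = None"
  shows "halting_round f T D' (map_prod (\<lambda>x. x + a) id z) = None"
proof -
  obtain \<tau> \<nu> where z: "z = (\<tau>, \<nu>)"
    by fastforce
  have never: "f i D + \<nu> i < T + \<tau>" for i
    using assms(2) by (simp add: z halting_round_eq_None_iff)
  have "f i D' + \<nu> i < T + (\<tau> + a)" for i
    using below[of i] never[of i] by linarith
  then show ?thesis
    by (simp add: z halting_round_eq_None_iff)
qed

lemma halting_round_shift_Some:
  assumes below: "\<And>i. f i D' \<le> f i D + a" and at_k: "f k D + a \<le> f k D' + a'"
    and "halting_round f T D z = Some k"
  shows "halting_round f T D' (map_prod (\<lambda>x. x + a) (\<lambda>\<nu>. \<nu>(k := \<nu> k + a')) z) = Some k"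
proof -
  obtain \<tau> \<nu> where z: "z = (\<tau>, \<nu>)"
    by fastforce
  have before: "\<forall>i<k. f i D + \<nu> i < T + \<tau>" and at: "T + \<tau> \<le> f k D + \<nu> k"
    using assms(3) by (simp_all add: z halting_round_eq_Some_iff)
  have "f i D' + \<nu> i < T + (\<tau> + a)" if "i < k" for i
    using below[of i] before[rule_format, OF that] by linarith
  moreover have "T + (\<tau> + a) \<le> f k D' + (\<nu> k + a')"
    using at at_k by linarith
  ultimately show ?thesis
    by (simp add: z halting_round_eq_Some_iff)
qed

lemma unidirectional_common_shift:
  assumes "\<And>i. sensitivity_one (f i) nb" and "unidirectional f nb" and "nb D D'"
  obtains a where "0 \<le> a" "a \<le> 1" "\<And>i. f i D' \<le> f i D + a" "\<And>i. f i D + a \<le> f i D' + 1"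
proof -
  have sens: "f i D \<le> f i D' + 1" "f i D' \<le> f i D + 1" for i
    using assms(1)[of i, unfolded sensitivity_one_def, rule_format, OF assms(3)]
    by (simp_all add: abs_le_iff)
  have "(\<forall>i. f i D' \<le> f i D) \<or> (\<forall>i. f i D \<le> f i D')"
    using assms(2,3) unfolding unidirectional_def by (metis not_le)
  then show ?thesis
  proof
    assume "\<forall>i. f i D' \<le> f i D"
    then show ?thesis
      using sens by (intro that[of 0]) auto
  next
    assume "\<forall>i. f i D \<le> f i D'"
    then show ?thesis
      using sens by (intro that[of 1]) auto
  qed
qed

lemma emeasure_halting_round_le:
  fixes \<epsilon> :: real
  defines "\<Omega> \<equiv> uds_noise (2 / \<epsilon>)"
  assumes \<epsilon>: "\<epsilon> > 0" and a: "0 \<le> a" "a \<le> 1"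
    and below: "\<And>i. f i D' \<le> f i D + a" and above: "\<And>i. f i D + a \<le> f i D' + 1"
  shows "emeasure \<Omega> (halting_round f T D -` {h}) \<le> exp \<epsilon> * emeasure \<Omega> (halting_round f T D' -` {h})"
proof -
  have sets: "halting_round f T D' -` {h} \<in> sets \<Omega>"
    using measurable_sets[OF measurable_halting_round, of "{h}" f T D' "2 / \<epsilon>"] by (simp add: \<Omega>_def)
  have shift: "pushforward_bounded \<Omega> (map_prod (\<lambda>x. x + a) (\<lambda>\<nu>. \<nu>(k := \<nu> k + a'))) (exp \<epsilon>)"
    if "0 \<le> a'" "a' \<le> 1" for k a'
  proof (rule pushforward_bounded_mono)
    show "pushforward_bounded \<Omega> (map_prod (\<lambda>x. x + a) (\<lambda>\<nu>. \<nu>(k := \<nu> k + a'))) (exp ((\<bar>a\<bar> + \<bar>a'\<bar>) / (2 / \<epsilon>)))"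
      unfolding \<Omega>_def using \<epsilon> by (intro pushforward_bounded_noise_shift) simp
    have "(\<bar>a\<bar> + \<bar>a'\<bar>) / (2 / \<epsilon>) = \<epsilon> * ((\<bar>a\<bar> + \<bar>a'\<bar>) / 2)"
      by simp
    also have "\<dots> \<le> \<epsilon> * 1"
      using \<epsilon> a that by (intro mult_left_mono) auto
    finally show "ennreal (exp ((\<bar>a\<bar> + \<bar>a'\<bar>) / (2 / \<epsilon>))) \<le> ennreal (exp \<epsilon>)"
      by (intro ennreal_leI) simp
  qed
  show ?thesis
  proof (cases h)
    case None
    have "(\<lambda>\<nu>::nat \<Rightarrow> real. \<nu>(0 := \<nu> 0 + 0)) = id"
      by auto
    then have "pushforward_bounded \<Omega> (map_prod (\<lambda>x. x + a) id) (exp \<epsilon>)"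
      using shift[of 0 0] by simp
    then show ?thesis
      using sets by (rule emeasure_le_pushforward_bounded)
        (use None halting_round_shift_None[of f D' D a, OF below] in \<open>auto simp: \<Omega>_def\<close>)
  next
    case (Some k)
    show ?thesis
      using shift[of 1 k] sets by (rule emeasure_le_pushforward_bounded)
        (use Some halting_round_shift_Some[of f D' D a, OF below above] in \<open>auto simp: \<Omega>_def\<close>)
  qed
qed

theorem theorem4p1:
  fixes \<epsilon> T :: real and f :: "nat \<Rightarrow> 'a list \<Rightarrow> real"
  assumes "\<epsilon> > 0"
    and "\<And>i. sensitivity_one (f i) neighboring"
    and "unidirectional f neighboring"
  shows "differentially_private (UDSAboveThreshold \<epsilon> f T) neighboring \<epsilon>"
  unfolding differentially_private_def emeasure_UDSAboveThreshold
proof (intro allI impI ballI)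
  let ?halt = "\<lambda>D. distr (uds_noise (2 / \<epsilon>)) (count_space UNIV) (halting_round f T D)"
  fix D D' :: "'a list" and S
  assume "neighboring D D'"
  with assms(2,3) obtain a where a: "0 \<le> a" "a \<le> 1"
    and shift: "\<And>i. f i D' \<le> f i D + a" "\<And>i. f i D + a \<le> f i D' + 1"
    by (rule unidirectional_common_shift) auto
  have "emeasure (?halt D) {h} \<le> exp \<epsilon> * emeasure (?halt D') {h}" for h
    using emeasure_halting_round_le[OF assms(1) a, of f D' D, OF shift]
    by (simp add: emeasure_distr[OF measurable_halting_round])
  then have "emeasure (?halt D) B \<le> exp \<epsilon> * emeasure (?halt D') B" for B
    by (rule emeasure_countable_le_of_singletons[rotated 2]) simp_all
  then show "emeasure (?halt D) (transcript_of_halt -` S) \<le> exp \<epsilon> * emeasure (?halt D') (transcript_of_halt -` S)" .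
qed

end
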